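(* Let $R$ be a $\star$-ring. The following are equivalent: (1) $R$ is weakly $\star$-clean and $2\in U(R)$; (2) every element $a\in R$ can be written either as $a=u+x$ with $u\in U(R)$ and $x^2=1$, $x^\star=x$, or as $a=u+(2p+1)$ with $u\in U(R)$ and $p^2=p=p^\star$.
   Context: Rings are associative with identity. A $\star$-ring is a ring with a map $\star:R\to R$ satisfying $(x+y)^\star=x^\star+y^\star$, $(xy)^\star=y^\star x^\star$, $(x^\star)^\star=x$. A projection is $p$ with $p^2=p=p^\star$; $P(R)$ is the set of projections and $U(R)$ the units. An element $x$ is weakly $\star$-clean if $x=u+p$ or $x=u-p$ with $u\in U(R)$, $p\in P(R)$; $R$ is weakly $\star$-clean if all its elements are. *)

theory Defs
  imports Main
begin

definition star_ring :: "('a::ring_1 \<Rightarrow> 'a) \<Rightarrow> bool" where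
  "star_ring st \<longleftrightarrow>
     (\<forall>x y. st (x + y) = st x + st y) \<and>
     (\<forall>x y. st (x * y) = st y * st x) \<and>
     (\<forall>x. st (st x) = x)"

definition units :: "'a::ring_1 set" where
  "units = {u. \<exists>v. u * v = 1 \<and> v * u = 1}"

definition projections :: "('a::ring_1 \<Rightarrow> 'a) \<Rightarrow> 'a set" where
  "projections st = {p. p * p = p \<and> st p = p}"

definition weakly_star_clean_elem :: "('a::ring_1 \<Rightarrow> 'a) \<Rightarrow> 'a \<Rightarrow> bool" where
  "weakly_star_clean_elem st x \<longleftrightarrow>
     (\<exists>u\<in>units. \<exists>p\<in>projections st. x = u + p \<or> x = u - p)"

definition weakly_star_clean :: "('a::ring_1 \<Rightarrow> 'a) \<Rightarrow> bool" where
  "weakly_star_clean st \<longleftrightarrow> (\<forall>x. weakly_star_clean_elem st x)"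

end

theory Submission
  imports Defs
begin

text \<open>When 2 is a unit, \<open>b \<mapsto> 2 b + 1\<close> is a bijection of the ring, and it carries
  \<open>u + p\<close> to \<open>2u + (2p + 1)\<close> and \<open>u - p\<close> to \<open>2u + (1 - 2p)\<close>, where \<open>1 - 2p\<close> is a
  self-adjoint square root of 1. Conversely every self-adjoint \<open>x\<close> with \<open>x\<^sup>2 = 1\<close> arises
  this way from the projection \<open>(1 - x)/2\<close>. So weakly \<open>\<star>\<close>-clean decompositions of \<open>b\<close> and
  decompositions of \<open>2 b + 1\<close> of the second kind correspond. That 2 is a unit follows by
  decomposing \<open>1\<close>: \<open>1 = u + x\<close> forces \<open>u (1 + x) = 0\<close>, hence \<open>x = -1\<close> and \<open>u = 2\<close>;
  \<open>1 = u + 2p + 1\<close> makes the idempotent \<open>p\<close> a unit, hence \<open>p = 1\<close> and \<open>u = -2\<close>.\<close>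

definition sym_involutions :: "('a::ring_1 \<Rightarrow> 'a) \<Rightarrow> 'a set" where
  "sym_involutions st = {x. x * x = 1 \<and> st x = x}"

definition involution_clean_elem :: "('a::ring_1 \<Rightarrow> 'a) \<Rightarrow> 'a \<Rightarrow> bool" where
  "involution_clean_elem st a \<longleftrightarrow>
     (\<exists>u\<in>units. \<exists>x\<in>sym_involutions st. a = u + x) \<or>
     (\<exists>u\<in>units. \<exists>p\<in>projections st. a = u + (2 * p + 1))"

lemma units_mult_closed:
  assumes "(a::'a::ring_1) \<in> units" and "b \<in> units"
  shows "a * b \<in> units"
proof -
  obtain va vb where a: "a * va = 1" "va * a = 1" and b: "b * vb = 1" "vb * b = 1"
    using assms unfolding units_def by blast
  have "(a * b) * (vb * va) = a * (b * vb) * va" "(vb * va) * (a * b) = vb * (va * a) * b"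
    by (simp_all only: mult.assoc)
  then have "(a * b) * (vb * va) = 1" "(vb * va) * (a * b) = 1"
    using a b by simp_all
  then show ?thesis unfolding units_def by blast
qed

lemma units_uminus:
  assumes "(a::'a::ring_1) \<in> units"
  shows "- a \<in> units"
proof -
  obtain v where "a * v = 1" "v * a = 1" using assms unfolding units_def by blast
  then have "- a * - v = 1" "- v * - a = 1" by simp_all
  then show ?thesis unfolding units_def by blast
qed

lemma units_mult_eq_0_cancel:
  assumes "(u::'a::ring_1) \<in> units" and "u * x = 0"
  shows "x = 0"
proof -
  obtain v where "v * u = 1" using assms(1) unfolding units_def by blast
  then have "x = v * (u * x)" by (simp flip: mult.assoc)
  with assms(2) show ?thesis by simp
qed

lemma idempotent_right_invertible_eq_1:
  assumes "(p::'a::ring_1) * v = 1" and "p * p = p"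
  shows "p = 1"
proof -
  have "p = (p * p) * v" using assms(1) by (simp add: mult.assoc)
  with assms show ?thesis by simp
qed

lemma inverse_of_two_central:
  assumes "2 * h = (1::'a::ring_1)" and "h * 2 = 1"
  shows "h * x = x * h"
proof -
  have "h * x = h * x * (2 * h)" using assms by simp
  also have "\<dots> = h * (x * 2) * h" by (simp add: mult.assoc)
  also have "\<dots> = (h * 2) * x * h" by (simp add: mult_2 mult_2_right algebra_simps)
  finally show ?thesis using assms by simp
qed

lemma star_ring_simps:
  assumes "star_ring st"
  shows "st (x + y) = st x + st y" "st (x * y) = st y * st x" "st (st x) = x"
    "st 0 = 0" "st (- x) = - st x" "st (x - y) = st x - st y" "st 1 = 1" "st 2 = 2"
proof -
  have add: "st (x + y) = st x + st y" and mult: "st (x * y) = st y * st x"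
    and invol: "st (st x) = x" for x y
    using assms unfolding star_ring_def by auto
  show "st (x + y) = st x + st y" "st (x * y) = st y * st x" "st (st x) = x"
    by (fact add mult invol)+
  show zero: "st 0 = 0" using add[of 0 0] by simp
  show uminus: "st (- x) = - st x" for x
    using add[of x "- x"] zero by (simp add: minus_unique)
  show "st (x - y) = st x - st y" using add[of x "- y"] uminus[of y] by simp
  have "st 1 = st (st 1 * 1)" using mult[of "st 1" 1] invol by simp
  then show one: "st 1 = 1" using invol by simp
  show "st 2 = 2" using add[of 1 1] one by (simp add: one_add_one[symmetric] del: one_add_one)
qed

lemma star_inverse_of_two:
  assumes "star_ring st" and "2 * h = (1::'a::ring_1)" and "h * 2 = 1"
  shows "st h = h"
proof -
  have "2 * st h = 1" using arg_cong[OF assms(3), of st] star_ring_simps[OF assms(1)] by simp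
  then have "h * 2 * st h = h" by (simp add: mult.assoc)
  with assms(3) show ?thesis by simp
qed

lemma reflection_of_projection:
  assumes "star_ring st" and "p \<in> projections st"
  shows "1 - 2 * p \<in> sym_involutions st"
proof -
  have p: "p * p = p" "st p = p" using assms(2) unfolding projections_def by auto
  have "(1 - 2 * p) * (1 - 2 * p) = 1" using p(1) by (simp add: algebra_simps mult_2 mult_2_right)
  moreover have "st (1 - 2 * p) = 1 - 2 * p" using p(2) star_ring_simps[OF assms(1)] by (simp add: mult_2)
  ultimately show ?thesis unfolding sym_involutions_def by simp
qed

lemma projection_of_reflection:
  assumes "star_ring st" and "2 * h = (1::'a::ring_1)" and "h * 2 = 1"
    and "x \<in> sym_involutions st"
  shows "h * (1 - x) \<in> projections st"
proof -
  have x: "x * x = 1" "st x = x" using assms(4) unfolding sym_involutions_def by auto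
  have central: "h * y = y * h" for y using inverse_of_two_central[OF assms(2,3)] .
  have "(1 - x) * (1 - x) = 2 * (1 - x)" using x(1) by (simp add: algebra_simps mult_2)
  then have "h * (1 - x) * (h * (1 - x)) = h * (h * 2) * (1 - x)"
    using central by (metis mult.assoc)
  then have "h * (1 - x) * (h * (1 - x)) = h * (1 - x)" using assms(3) by simp
  moreover have "st (h * (1 - x)) = h * (1 - x)"
    using star_ring_simps[OF assms(1)] star_inverse_of_two[OF assms(1-3)] x(2) central by simp
  ultimately show ?thesis unfolding projections_def by simp
qed

lemma two_unit_if_involution_clean_one:
  assumes "involution_clean_elem st (1::'a::ring_1)"
  shows "(2::'a) \<in> units"
  using assms unfolding involution_clean_elem_def
proof
  assume "\<exists>u\<in>units. \<exists>x\<in>sym_involutions st. (1::'a) = u + x"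
  then obtain u x :: 'a where u: "u \<in> units" and x: "x * x = 1" and "u + x = 1"
    by (auto simp: sym_involutions_def)
  then have ux: "u = 1 - x" by (simp add: algebra_simps)
  have "u * (1 + x) = 0" using x unfolding ux by (simp add: algebra_simps)
  then have "x = - 1" using units_mult_eq_0_cancel[OF u] by (simp add: eq_neg_iff_add_eq_0 add.commute)
  with u ux show ?thesis by simp
next
  assume "\<exists>u\<in>units. \<exists>p\<in>projections st. (1::'a) = u + (2 * p + 1)"
  then obtain u p :: 'a where u: "u \<in> units" and p: "p * p = p" and "1 = u + (2 * p + 1)"
    by (auto simp: projections_def)
  then have "u + 2 * p = 0" by (metis add.assoc add_cancel_left_left add.commute)
  then have up: "u = - (2 * p)" by (simp add: eq_neg_iff_add_eq_0)
  obtain v where "u * v = 1" using u unfolding units_def by blast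
  have "2 * p = p * 2" by (simp add: mult_2 mult_2_right)
  then have "p * - (2 * v) = u * v" unfolding up by (simp add: mult.assoc)
  then have "p * - (2 * v) = 1" using \<open>u * v = 1\<close> by simp
  then have "p = 1" using p by (rule idempotent_right_invertible_eq_1)
  then show ?thesis using units_uminus[OF u] up by simp
qed

lemma involution_clean_if_weakly_star_clean:
  fixes b :: "'a::ring_1"
  assumes "star_ring st" and "weakly_star_clean_elem st b" and "(2::'a) \<in> units"
  shows "involution_clean_elem st (2 * b + 1)"
proof -
  obtain u p where u: "u \<in> units" and p: "p \<in> projections st" and b: "b = u + p \<or> b = u - p"
    using assms(2) unfolding weakly_star_clean_elem_def by blast
  have u2: "2 * u \<in> units" using units_mult_closed[OF assms(3) u] .
  from b show ?thesis
  proof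
    assume "b = u + p"
    then have "2 * b + 1 = 2 * u + (2 * p + 1)" by (simp add: distrib_left add.assoc)
    with u2 p show ?thesis unfolding involution_clean_elem_def by blast
  next
    assume "b = u - p"
    then have "2 * b + 1 = 2 * u + (1 - 2 * p)" by (simp add: right_diff_distrib)
    with u2 reflection_of_projection[OF assms(1) p] show ?thesis
      unfolding involution_clean_elem_def by blast
  qed
qed

lemma weakly_star_clean_if_involution_clean:
  fixes b :: "'a::ring_1"
  assumes "star_ring st" and "2 * h = (1::'a)" and "h * 2 = 1"
    and "involution_clean_elem st (2 * b + 1)"
  shows "weakly_star_clean_elem st b"
proof -
  have h: "h \<in> units" using assms(2,3) unfolding units_def by blast
  have half: "b = h * (2 * b)" using assms(3) by (simp flip: mult.assoc)
  from assms(4) show ?thesis unfolding involution_clean_elem_def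
  proof
    assume "\<exists>u\<in>units. \<exists>x\<in>sym_involutions st. 2 * b + 1 = u + x"
    then obtain u x where u: "u \<in> units" and x: "x \<in> sym_involutions st" and "2 * b = u - (1 - x)"
      by (auto simp: algebra_simps)
    then have "b = h * (u - (1 - x))" using half by (simp only:)
    then have "b = h * u - h * (1 - x)" by (simp add: right_diff_distrib)
    with units_mult_closed[OF h u] projection_of_reflection[OF assms(1-3) x] show ?thesis
      unfolding weakly_star_clean_elem_def by blast
  next
    assume "\<exists>u\<in>units. \<exists>p\<in>projections st. 2 * b + 1 = u + (2 * p + 1)"
    then obtain u p where u: "u \<in> units" and p: "p \<in> projections st" and "2 * b = u + 2 * p"
      by (auto simp: algebra_simps)
    then have "b = h * (u + 2 * p)" using half by (simp only:)
    then have "b = h * u + (h * 2) * p" by (simp add: distrib_left mult.assoc)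
    then have "b = h * u + p" using assms(3) by simp
    with units_mult_closed[OF h u] p show ?thesis
      unfolding weakly_star_clean_elem_def by blast
  qed
qed

lemma weakly_star_clean_and_two_unit_iff:
  fixes st :: "'a::ring_1 \<Rightarrow> 'a"
  assumes "star_ring st"
  shows "(weakly_star_clean st \<and> (2::'a) \<in> units) \<longleftrightarrow> (\<forall>a. involution_clean_elem st a)"
proof
  assume H: "weakly_star_clean st \<and> (2::'a) \<in> units"
  then have clean: "weakly_star_clean_elem st b" for b
    unfolding weakly_star_clean_def by blast
  from H have two: "(2::'a) \<in> units" by blast
  then obtain h where h: "2 * h = (1::'a)" "h * 2 = 1" unfolding units_def by blast
  show "\<forall>a. involution_clean_elem st a"
  proof
    fix a :: 'a
    have "a = 2 * (h * (a - 1)) + 1" using h by (simp flip: mult.assoc)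
    then show "involution_clean_elem st a"
      by (subst \<open>a = _\<close>) (rule involution_clean_if_weakly_star_clean[OF assms clean two])
  qed
next
  assume clean: "\<forall>a. involution_clean_elem st a"
  then have two: "(2::'a) \<in> units" using two_unit_if_involution_clean_one[of st] by blast
  then obtain h where h: "2 * h = (1::'a)" "h * 2 = 1" unfolding units_def by blast
  have "weakly_star_clean_elem st b" for b
    using weakly_star_clean_if_involution_clean[OF assms h] clean by simp
  with two show "weakly_star_clean st \<and> (2::'a) \<in> units"
    unfolding weakly_star_clean_def by blast
qed

theorem theorem4p7:
  fixes st :: "'a::ring_1 \<Rightarrow> 'a"
  assumes "star_ring st"
  shows "(weakly_star_clean st \<and> (2::'a) \<in> units) \<longleftrightarrow>
         (\<forall>a::'a. (\<exists>u\<in>units. \<exists>x. x * x = 1 \<and> st x = x \<and> a = u + x) \<or>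
                  (\<exists>u\<in>units. \<exists>p. p * p = p \<and> st p = p \<and> a = u + (2 * p + 1)))"
  using weakly_star_clean_and_two_unit_iff[OF assms]
  by (simp add: involution_clean_elem_def sym_involutions_def projections_def conj_assoc)

end
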